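(* Let $h\ge r$ be positive integers and let $0<\beta<1$ be a real. There exists a positive real $\alpha$ depending on $h,r,\beta$ such that the following holds. Let $G$ be any graph on $n$ vertices and let $p=p_r(G)$. For $0\le i\le h$ and $1\le j\le h$, let $\mathcal{A}_{i,j}$ denote the set of $i$-good sequences of length $j$ relative to $(\alpha,\beta,h,r)$ in $V(G)$, and let $\mathcal{B}_{i,j}=V(G)^j\setminus\mathcal{A}_{i,j}$. Then for each $0\le i\le h$, $1\le j\le h$ and $1\le\ell\le j$, \[\sum_{S\in\mathcal{B}_{i,j}}|N(S)|^\ell\le\beta\,n^{j+\ell}p^{j\ell}.\]
   Context: All graphs are finite and simple. For a positive integer $r$, $p_r(G)=t_{K_{1,r}}(G)^{1/r}=\frac1n\left(\frac1n\sum_{v\in V(G)}d(v)^r\right)^{1/r}$ where $n=|G|$. A sequence in a set $W$ is a finite sequence of elements of $W$ (repetitions allowed); its length $|S|$ counts multiplicity; $W^k$ denotes the set of sequences of length $k$ in $W$. For a sequence $S$ in $V(G)$, $N(S)$ is the set of vertices adjacent to every vertex of $S$. Goodness: fix reals $0<\alpha,\beta<1$ and positive integers $h,r$, and let $p=p_r(G)$. A sequence $T$ in $V(G)$ is $0$-good if $|N(T)|\ge\alpha p^{|T|}n$. For $1\le i\le h$, a sequence $S$ in $V(G)$ of length at most $h$ is $i$-good if $S$ is $0$-good and for each $|S|\le k\le h$, the number of $(i-1)$-good sequences in $N(S)^k$ is at least $(1-\beta)|N(S)|^k$. These are called $i$-good relative to $(\alpha,\beta,h,r)$. *)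

theory Defs
  imports Complex_Main
begin

text \<open>A finite simple graph: finite vertex set V, symmetric irreflexive edge relation E on V.
Vertices are natural numbers (every finite graph is isomorphic to one of these).\<close>
definition simple_graph :: "nat set \<Rightarrow> (nat \<Rightarrow> nat \<Rightarrow> bool) \<Rightarrow> bool" where
  "simple_graph V E \<longleftrightarrow> finite V \<and> (\<forall>u v. E u v \<longrightarrow> u \<in> V \<and> v \<in> V)
     \<and> (\<forall>u v. E u v \<longrightarrow> E v u) \<and> (\<forall>v. \<not> E v v)"

definition deg :: "nat set \<Rightarrow> (nat \<Rightarrow> nat \<Rightarrow> bool) \<Rightarrow> nat \<Rightarrow> nat" where
  "deg V E v = card {u \<in> V. E v u}"

definition pr :: "nat set \<Rightarrow> (nat \<Rightarrow> nat \<Rightarrow> bool) \<Rightarrow> nat \<Rightarrow> real" where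
  "pr V E r = (1 / real (card V)) *
      root r ((1 / real (card V)) * (\<Sum>v\<in>V. real (deg V E v) ^ r))"

definition nbhd :: "nat set \<Rightarrow> (nat \<Rightarrow> nat \<Rightarrow> bool) \<Rightarrow> nat list \<Rightarrow> nat set" where
  "nbhd V E S = {v \<in> V. \<forall>u \<in> set S. E u v}"

definition seqs :: "'a set \<Rightarrow> nat \<Rightarrow> 'a list set" where
  "seqs W k = {xs. set xs \<subseteq> W \<and> length xs = k}"

fun good :: "real \<Rightarrow> real \<Rightarrow> nat \<Rightarrow> nat \<Rightarrow> nat set \<Rightarrow> (nat \<Rightarrow> nat \<Rightarrow> bool) \<Rightarrow> nat \<Rightarrow> nat list \<Rightarrow> bool" where
  "good al be h r V E 0 T \<longleftrightarrow> set T \<subseteq> V \<and>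
      real (card (nbhd V E T)) \<ge> al * pr V E r ^ length T * real (card V)"
| "good al be h r V E (Suc i) S \<longleftrightarrow> length S \<le> h \<and> good al be h r V E 0 S \<and>
      (\<forall>k. length S \<le> k \<and> k \<le> h \<longrightarrow>
         real (card {T \<in> seqs (nbhd V E S) k. good al be h r V E i T})
           \<ge> (1 - be) * real (card (nbhd V E S)) ^ k)"

end

(*
  Induction on i: the sum over the sequences of length j that are not i-good is at most
  \<epsilon>_i n^(j+l) p^(jl).  A sequence that is not 0-good has |N(S)| < \<alpha> p^j n, which settles
  i = 0.  A 0-good sequence S that is not (i+1)-good has, for some k \<in> [j, h], more than
  \<beta> |N(S)|^k sequences in N(S)^k that are not i-good; since |N(S)|^l \<le> c^l + |N(S)|^k / c^(k-l),
  its term is at most c^l plus their number divided by \<beta> c^(k-l).  Summed over S, that number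
  is by double counting the sum of |N(T)|^j over the sequences T of length k that are not
  i-good, which the induction hypothesis bounds.  With c = \<gamma> n p^j, \<gamma> = \<epsilon>_(i+1) / (3h) and
  \<epsilon>_i = \<beta> \<gamma>^(h+1), each of the at most h values of k contributes at most 2\<gamma> n^(j+l) p^(jl),
  so the total factor is at most \<alpha> + 2/3 \<epsilon>_(i+1) \<le> \<epsilon>_(i+1) once \<alpha> \<le> \<epsilon>_0 / 3.
*)
theory Submission
  imports Defs
begin

lemma finite_seqs: "finite W \<Longrightarrow> finite (seqs W k)"
  unfolding seqs_def by (rule finite_lists_length_eq)

lemma card_seqs: "finite W \<Longrightarrow> card (seqs W k) = card W ^ k"
  unfolding seqs_def by (rule card_lists_length_eq)

lemma nbhd_subset: "nbhd V E S \<subseteq> V"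
  unfolding nbhd_def by auto

lemma seqs_mono: "A \<subseteq> B \<Longrightarrow> seqs A k \<subseteq> seqs B k"
  unfolding seqs_def by auto

lemma simple_graph_finite: "simple_graph V E \<Longrightarrow> finite V"
  unfolding simple_graph_def by simp

lemma finite_nbhd: "finite V \<Longrightarrow> finite (nbhd V E S)"
  by (rule finite_subset[OF nbhd_subset])

lemma mem_seqs_nbhd_iff:
  assumes "simple_graph V E" "S \<in> seqs V j" "T \<in> seqs V k"
  shows "T \<in> seqs (nbhd V E S) k \<longleftrightarrow> S \<in> seqs (nbhd V E T) j"
  using assms unfolding simple_graph_def seqs_def nbhd_def by blast

text \<open>Both sides count the pairs (S, T) \<in> V^j \<times> B with every entry of S adjacent to every
  entry of T.\<close>
lemma sum_card_seqs_nbhd_Int: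
  assumes G: "simple_graph V E" and B: "B \<subseteq> seqs V k"
  shows "(\<Sum>S\<in>seqs V j. card (seqs (nbhd V E S) k \<inter> B)) = (\<Sum>T\<in>B. card (nbhd V E T) ^ j)"
proof -
  have fV: "finite V" using G by (rule simple_graph_finite)
  have fB: "finite B" using B finite_seqs[OF fV] by (rule finite_subset)
  have "(\<Sum>S\<in>seqs V j. card (seqs (nbhd V E S) k \<inter> B))
      = (\<Sum>S\<in>seqs V j. \<Sum>T\<in>{T \<in> B. T \<in> seqs (nbhd V E S) k}. 1)"
    by (simp add: Int_commute Int_def)
  also have "\<dots> = (\<Sum>T\<in>B. \<Sum>S\<in>{S \<in> seqs V j. T \<in> seqs (nbhd V E S) k}. 1)"
    by (rule sum.swap_restrict[OF finite_seqs[OF fV] fB])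
  also have "\<dots> = (\<Sum>T\<in>B. card (seqs (nbhd V E T) j))"
  proof (intro sum.cong refl)
    fix T assume "T \<in> B"
    then have "{S \<in> seqs V j. T \<in> seqs (nbhd V E S) k} = seqs (nbhd V E T) j"
      using B mem_seqs_nbhd_iff[OF G] seqs_mono[OF nbhd_subset] by blast
    then show "(\<Sum>S\<in>{S \<in> seqs V j. T \<in> seqs (nbhd V E S) k}. 1) = card (seqs (nbhd V E T) j)"
      by simp
  qed
  also have "\<dots> = (\<Sum>T\<in>B. card (nbhd V E T) ^ j)"
    using card_seqs[OF finite_nbhd[OF fV]] by simp
  finally show ?thesis .
qed

lemma nbhd_eq_empty_if_pr_eq_0:
  assumes fV: "finite V" and r: "0 < r" and p: "pr V E r = 0"
    and S: "set S \<subseteq> V" "S \<noteq> []"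
  shows "nbhd V E S = {}"
proof (rule ccontr)
  define u where "u = hd S"
  have u: "u \<in> set S" using S by (simp add: u_def)
  assume "nbhd V E S \<noteq> {}"
  then obtain v where "v \<in> V" "E u v" using u unfolding nbhd_def by auto
  then have "0 < deg V E u" unfolding deg_def using fV by (auto simp: card_gt_0_iff)
  moreover have uV: "u \<in> V" using S(1) u by auto
  ultimately have "0 < (\<Sum>w\<in>V. real (deg V E w) ^ r)"
    using fV by (intro sum_pos2[of V u]) auto
  moreover have "0 < card V" using fV uV card_gt_0_iff by blast
  ultimately have "0 < pr V E r" unfolding pr_def using r by simp
  with p show False by simp
qed

lemma sum_power_card_nbhd_eq_0_if_pr_eq_0:
  assumes "finite V" "0 < r" "pr V E r = 0" "A \<subseteq> seqs V j" "1 \<le> j" "1 \<le> l"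
  shows "(\<Sum>S\<in>A. real (card (nbhd V E S)) ^ l) = 0"
proof (rule sum.neutral, rule ballI)
  fix S assume "S \<in> A"
  then have "nbhd V E S = {}"
    using assms unfolding seqs_def by (intro nbhd_eq_empty_if_pr_eq_0[OF assms(1-3)]) auto
  then show "real (card (nbhd V E S)) ^ l = 0" using assms(6) by simp
qed

lemma pr_nonneg: "0 < r \<Longrightarrow> 0 \<le> pr V E r"
  unfolding pr_def by (simp add: sum_nonneg)

lemma card_pos_if_pr_pos: "0 < pr V E r \<Longrightarrow> 0 < card V"
  by (rule ccontr) (simp add: pr_def)

lemma power_le_mult_power_of_less:
  fixes x a q :: real
  assumes "0 \<le> x" "x < a * q" "0 \<le> a" "a \<le> 1" "1 \<le> l"
  shows "x ^ l \<le> a * q ^ l"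
proof -
  have "0 < a * q" using assms by linarith
  then have q: "0 < q" using assms(3) by (simp add: zero_less_mult_iff)
  have "x ^ l \<le> (a * q) ^ l" using assms by (intro power_mono) auto
  also have "\<dots> = a ^ l * q ^ l" by (rule power_mult_distrib)
  also have "\<dots> \<le> a * q ^ l"
    using power_decreasing[of 1 l a] assms q by (intro mult_right_mono) auto
  finally show ?thesis .
qed

lemma power_le_add_power_div:
  fixes x c :: real
  assumes "0 \<le> x" "0 < c" "l \<le> k"
  shows "x ^ l \<le> c ^ l + x ^ k / c ^ (k - l)"
proof (cases "x \<le> c")
  case True
  then have "x ^ l \<le> c ^ l" using assms by (simp add: power_mono)
  moreover have "0 \<le> x ^ k / c ^ (k - l)" using assms by simp
  ultimately show ?thesis by linarith
next
  case False
  then have "x ^ l * c ^ (k - l) \<le> x ^ l * x ^ (k - l)"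
    using assms by (intro mult_left_mono power_mono) auto
  also have "\<dots> = x ^ k" using assms by (simp flip: power_add)
  finally have "x ^ l \<le> x ^ k / c ^ (k - l)" using assms by (simp add: field_simps)
  moreover have "0 \<le> c ^ l" using assms by simp
  ultimately show ?thesis by linarith
qed

lemma balanced_split_le:
  fixes n q \<gamma> b \<epsilon> s :: real
  assumes "0 < n" "0 < q" "0 < \<gamma>" "\<gamma> \<le> 1" "0 < b" "0 \<le> \<epsilon>" "1 \<le> l" "l \<le> k" "k \<le> h"
    and s: "s \<le> \<epsilon> * n ^ j * q ^ k"
  shows "n ^ j * (\<gamma> * q) ^ l + s / (b * (\<gamma> * q) ^ (k - l))
    \<le> n ^ j * q ^ l * (\<gamma> + \<epsilon> / (b * \<gamma> ^ h))"
proof -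
  define M where "M = n ^ j * q ^ l"
  have M: "0 < M" using assms by (simp add: M_def)
  have "n ^ j * (\<gamma> * q) ^ l = \<gamma> ^ l * M" by (simp add: M_def power_mult_distrib)
  also have "\<dots> \<le> \<gamma> * M"
    using assms M power_decreasing[of 1 l \<gamma>] by (intro mult_right_mono) auto
  finally have first: "n ^ j * (\<gamma> * q) ^ l \<le> M * \<gamma>" by (simp only: mult.commute)
  have "s \<le> \<epsilon> * M * q ^ (k - l)"
    using s assms by (simp add: M_def mult_ac flip: power_add)
  then have "s / (b * (\<gamma> * q) ^ (k - l)) \<le> \<epsilon> * M / (b * \<gamma> ^ (k - l))"
    using assms by (simp add: field_simps)
  also have "\<dots> \<le> \<epsilon> * M / (b * \<gamma> ^ h)"
    using assms M power_decreasing[of "k - l" h \<gamma>]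
    by (intro divide_left_mono mult_left_mono mult_pos_pos) auto
  finally show ?thesis using first by (simp add: M_def[symmetric] algebra_simps)
qed

text \<open>Indexed by h - i: eps_seq b h (h - i) is the bound \<epsilon>_i for the sequences that are not
  i-good.\<close>
fun eps_seq :: "real \<Rightarrow> nat \<Rightarrow> nat \<Rightarrow> real" where
  "eps_seq b h 0 = b"
| "eps_seq b h (Suc d) = b * (eps_seq b h d / (3 * real h)) ^ Suc h"

lemma eps_seq_pos: "0 < b \<Longrightarrow> 1 \<le> h \<Longrightarrow> 0 < eps_seq b h d"
  by (induction d) auto

lemma eps_seq_le:
  assumes b: "0 < b" "b \<le> 1" and h: "1 \<le> h"
  shows "eps_seq b h d \<le> b"
proof (induction d)
  case (Suc d)
  have "eps_seq b h d / (3 * real h) \<le> 1"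
    using Suc b h by (simp add: field_simps)
  then have "(eps_seq b h d / (3 * real h)) ^ Suc h \<le> 1"
    using eps_seq_pos[OF b(1) h, of d] h by (intro power_le_one) auto
  then show ?case using b by (metis eps_seq.simps(2) less_imp_le mult_left_le)
qed simp

lemma eps_seq_Suc_le:
  assumes b: "0 < b" "b \<le> 1" and h: "1 \<le> h"
  shows "eps_seq b h (Suc d) \<le> eps_seq b h d"
proof -
  define \<gamma> where "\<gamma> = eps_seq b h d / (3 * real h)"
  have \<gamma>: "0 < \<gamma>" "\<gamma> \<le> 1" "\<gamma> \<le> eps_seq b h d"
    using eps_seq_pos[OF b(1) h, of d] eps_seq_le[OF b h, of d] b h
    by (auto simp: \<gamma>_def field_simps)
  have "eps_seq b h (Suc d) = b * \<gamma> ^ Suc h" by (simp add: \<gamma>_def)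
  also have "\<dots> \<le> 1 * \<gamma> ^ 1"
    using \<gamma> b by (intro mult_mono power_decreasing) auto
  finally show ?thesis using \<gamma> by simp
qed

lemma eps_seq_antimono:
  "0 < b \<Longrightarrow> b \<le> 1 \<Longrightarrow> 1 \<le> h \<Longrightarrow> d \<le> d' \<Longrightarrow> eps_seq b h d' \<le> eps_seq b h d"
  using decseq_SucI[of "eps_seq b h"] eps_seq_Suc_le by (simp add: antimono_def)

lemma eps_seq_step_eq:
  assumes "0 < b" "1 \<le> h"
  shows "real h * (eps_seq b h d / (3 * real h)
           + eps_seq b h (Suc d) / (b * (eps_seq b h d / (3 * real h)) ^ h))
         = 2 / 3 * eps_seq b h d"
  using assms eps_seq_pos[OF assms, of d] by (simp add: field_simps)

lemma power_card_nbhd_le_if_not_good_0: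
  assumes S: "S \<in> seqs V j" and not_good: "\<not> good al b h r V E 0 S"
    and p: "0 \<le> pr V E r" and al: "0 \<le> al" "al \<le> 1" and l: "1 \<le> l"
  shows "real (card (nbhd V E S)) ^ l \<le> al * real (card V) ^ l * pr V E r ^ (j * l)"
proof -
  have "real (card (nbhd V E S)) < al * (real (card V) * pr V E r ^ j)"
    using S not_good unfolding seqs_def by (auto simp: mult_ac)
  then have "real (card (nbhd V E S)) ^ l \<le> al * (real (card V) * pr V E r ^ j) ^ l"
    using al l by (intro power_le_mult_power_of_less) auto
  then show ?thesis by (simp add: power_mult_distrib power_mult mult_ac)
qed

lemma sum_not_good_0_le:
  assumes fV: "finite V" and p: "0 \<le> pr V E r" and al: "0 \<le> al" "al \<le> 1" and l: "1 \<le> l"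
  shows "(\<Sum>S\<in>seqs V j - {S. good al b h r V E 0 S}. real (card (nbhd V E S)) ^ l)
         \<le> al * real (card V) ^ (j + l) * pr V E r ^ (j * l)"
proof -
  let ?A = "seqs V j - {S. good al b h r V E 0 S}"
  have "(\<Sum>S\<in>?A. real (card (nbhd V E S)) ^ l)
        \<le> real (card ?A) * (al * real (card V) ^ l * pr V E r ^ (j * l))"
    using power_card_nbhd_le_if_not_good_0[OF _ _ p al l] by (intro sum_bounded_above) auto
  also have "\<dots> \<le> real (card (seqs V j)) * (al * real (card V) ^ l * pr V E r ^ (j * l))"
    using card_mono[OF finite_seqs[OF fV] Diff_subset] p al by (intro mult_right_mono) auto
  also have "\<dots> = al * real (card V) ^ (j + l) * pr V E r ^ (j * l)"
    by (simp add: card_seqs[OF fV] power_add)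
  finally show ?thesis .
qed

lemma card_not_good_gt_if_not_good_Suc:
  assumes fV: "finite V" and S: "S \<in> seqs V j" and jh: "j \<le> h"
    and good0: "good al b h r V E 0 S" and not_good: "\<not> good al b h r V E (Suc i) S"
  obtains k where "j \<le> k" "k \<le> h"
    "b * real (card (nbhd V E S)) ^ k < real (card {T \<in> seqs (nbhd V E S) k. \<not> good al b h r V E i T})"
proof -
  have "length S = j" using S unfolding seqs_def by simp
  then obtain k where k: "j \<le> k" "k \<le> h" and few_good:
    "real (card {T \<in> seqs (nbhd V E S) k. good al b h r V E i T})
       < (1 - b) * real (card (nbhd V E S)) ^ k"
    using good0 not_good jh by auto
  let ?N = "seqs (nbhd V E S) k"
  have "card {T \<in> ?N. good al b h r V E i T} + card {T \<in> ?N. \<not> good al b h r V E i T}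
      = card ({T \<in> ?N. good al b h r V E i T} \<union> {T \<in> ?N. \<not> good al b h r V E i T})"
    using finite_seqs[OF finite_nbhd[OF fV]] by (intro card_Un_disjoint[symmetric]) auto
  also have "\<dots> = card ?N" by (rule arg_cong[where f = card]) blast
  also have "\<dots> = card (nbhd V E S) ^ k" by (rule card_seqs[OF finite_nbhd[OF fV]])
  finally have "card {T \<in> ?N. good al b h r V E i T} + card {T \<in> ?N. \<not> good al b h r V E i T}
      = card (nbhd V E S) ^ k" .
  then have "real (card {T \<in> ?N. good al b h r V E i T})
      + real (card {T \<in> ?N. \<not> good al b h r V E i T}) = real (card (nbhd V E S)) ^ k"
    by (simp only: of_nat_add[symmetric] of_nat_power[symmetric] of_nat_eq_iff)
  with few_good k show thesis by (intro that) (auto simp: algebra_simps)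
qed

lemma power_card_nbhd_le_if_not_good_Suc:
  fixes c :: real
  assumes fV: "finite V" and p: "0 \<le> pr V E r" and al: "0 \<le> al" "al \<le> 1"
    and b: "0 < b" and c: "0 < c" and jl: "1 \<le> l" "l \<le> j" "j \<le> h"
    and S: "S \<in> seqs V j" and not_good: "\<not> good al b h r V E (Suc i) S"
  shows "real (card (nbhd V E S)) ^ l \<le> al * real (card V) ^ l * pr V E r ^ (j * l)
    + (\<Sum>k=j..h. c ^ l
         + real (card {T \<in> seqs (nbhd V E S) k. \<not> good al b h r V E i T}) / (b * c ^ (k - l)))"
    (is "?x ^ l \<le> ?a + (\<Sum>k=j..h. ?t k)")
proof -
  have t_nonneg: "0 \<le> ?t k" for k using b c by simp
  have a_nonneg: "0 \<le> ?a" using al p by simp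
  show ?thesis
  proof (cases "good al b h r V E 0 S")
    case False
    then have "?x ^ l \<le> ?a"
      using power_card_nbhd_le_if_not_good_0[OF S _ p al] jl by simp
    moreover have "0 \<le> (\<Sum>k=j..h. ?t k)" using t_nonneg by (rule sum_nonneg)
    ultimately show ?thesis by linarith
  next
    case True
    then obtain k where k: "j \<le> k" "k \<le> h" and many_bad:
      "b * ?x ^ k < real (card {T \<in> seqs (nbhd V E S) k. \<not> good al b h r V E i T})"
      using card_not_good_gt_if_not_good_Suc[OF fV S jl(3) _ not_good] by blast
    have "?x ^ l \<le> c ^ l + ?x ^ k / c ^ (k - l)"
      using c jl k by (intro power_le_add_power_div) auto
    also have "\<dots> \<le> ?t k"
      using many_bad b c by (simp add: field_simps)
    also have "\<dots> \<le> (\<Sum>k=j..h. ?t k)"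
      using k t_nonneg by (intro member_le_sum) auto
    finally show ?thesis using a_nonneg by linarith
  qed
qed

lemma sum_card_not_good_nbhd_le:
  assumes G: "simple_graph V E"
    and bound: "(\<Sum>T\<in>seqs V k - {T. good al b h r V E i T}. real (card (nbhd V E T)) ^ j) \<le> B"
  shows "(\<Sum>S\<in>seqs V j. real (card {T \<in> seqs (nbhd V E S) k. \<not> good al b h r V E i T})) \<le> B"
proof -
  let ?B = "seqs V k - {T. good al b h r V E i T}"
  have "{T \<in> seqs (nbhd V E S) k. \<not> good al b h r V E i T} = seqs (nbhd V E S) k \<inter> ?B" for S
    using seqs_mono[OF nbhd_subset] by blast
  then have "(\<Sum>S\<in>seqs V j. card {T \<in> seqs (nbhd V E S) k. \<not> good al b h r V E i T})
      = (\<Sum>T\<in>?B. card (nbhd V E T) ^ j)"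
    using sum_card_seqs_nbhd_Int[OF G, of ?B] by simp
  then show ?thesis using bound by (simp flip: of_nat_sum of_nat_power)
qed

lemma sum_not_good_Suc_le:
  fixes \<gamma> \<epsilon> :: real
  assumes G: "simple_graph V E" and p: "0 < pr V E r"
    and al: "0 \<le> al" "al \<le> 1" and b: "0 < b" and \<gamma>: "0 < \<gamma>" "\<gamma> \<le> 1" and \<epsilon>: "0 \<le> \<epsilon>"
    and jl: "1 \<le> l" "l \<le> j" "j \<le> h"
    and IH: "\<And>k. j \<le> k \<Longrightarrow> k \<le> h \<Longrightarrow>
      (\<Sum>T\<in>seqs V k - {T. good al b h r V E i T}. real (card (nbhd V E T)) ^ j)
        \<le> \<epsilon> * real (card V) ^ (k + j) * pr V E r ^ (k * j)"
  shows "(\<Sum>S\<in>seqs V j - {S. good al b h r V E (Suc i) S}. real (card (nbhd V E S)) ^ l)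
    \<le> (al + real h * (\<gamma> + \<epsilon> / (b * \<gamma> ^ h))) * real (card V) ^ (j + l) * pr V E r ^ (j * l)"
proof -
  have fV: "finite V" using G by (rule simple_graph_finite)
  define n where "n = real (card V)"
  define q where "q = n * pr V E r ^ j"
  define M where "M = n ^ (j + l) * pr V E r ^ (j * l)"
  define c where "c = \<gamma> * q"
  define bad where
    "bad k S = real (card {T \<in> seqs (nbhd V E S) k. \<not> good al b h r V E i T})" for k S
  define t where "t k S = c ^ l + bad k S / (b * c ^ (k - l))" for k S
  have n: "0 < n" using card_pos_if_pr_pos[OF p] by (simp add: n_def)
  have q: "0 < q" using n p by (simp add: q_def)
  have c: "0 < c" using \<gamma> q by (simp add: c_def)
  have M_eq: "M = n ^ j * q ^ l"
    by (simp add: M_def q_def power_add power_mult_distrib power_mult mult_ac)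
  have t_nonneg: "0 \<le> t k S" for k S using b c by (simp add: t_def bad_def)
  have pointwise: "real (card (nbhd V E S)) ^ l \<le> al * n ^ l * pr V E r ^ (j * l) + (\<Sum>k=j..h. t k S)"
    if "S \<in> seqs V j - {S. good al b h r V E (Suc i) S}" for S
    using power_card_nbhd_le_if_not_good_Suc[OF fV less_imp_le[OF p] al b c jl] that
    by (simp add: n_def t_def bad_def)
  have term_le: "(\<Sum>S\<in>seqs V j. t k S) \<le> M * (\<gamma> + \<epsilon> / (b * \<gamma> ^ h))" if k: "j \<le> k" "k \<le> h" for k
  proof -
    have "(\<Sum>S\<in>seqs V j. bad k S) \<le> \<epsilon> * n ^ j * q ^ k"
      using sum_card_not_good_nbhd_le[OF G IH[OF k]] unfolding bad_def n_def q_def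
      by (simp add: power_add power_mult_distrib power_mult mult_ac)
    then have "n ^ j * c ^ l + (\<Sum>S\<in>seqs V j. bad k S) / (b * c ^ (k - l))
        \<le> n ^ j * q ^ l * (\<gamma> + \<epsilon> / (b * \<gamma> ^ h))"
      unfolding c_def using n q \<gamma> b \<epsilon> jl k by (intro balanced_split_le) auto
    then show ?thesis
      by (simp add: t_def M_eq sum.distrib sum_divide_distrib card_seqs[OF fV] n_def)
  qed
  have "(\<Sum>S\<in>seqs V j - {S. good al b h r V E (Suc i) S}. real (card (nbhd V E S)) ^ l)
      \<le> (\<Sum>S\<in>seqs V j. al * n ^ l * pr V E r ^ (j * l) + (\<Sum>k=j..h. t k S))"
  proof (rule order.trans[OF sum_mono sum_mono2])
    show "0 \<le> al * n ^ l * pr V E r ^ (j * l) + (\<Sum>k=j..h. t k S)" for S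
      using al p n t_nonneg by (intro add_nonneg_nonneg sum_nonneg) auto
  qed (use pointwise finite_seqs[OF fV] in auto)
  also have "\<dots> = al * M + (\<Sum>k=j..h. \<Sum>S\<in>seqs V j. t k S)"
    by (simp add: sum.distrib sum.swap[of _ "seqs V j"] card_seqs[OF fV] M_def n_def power_add)
  also have "\<dots> \<le> al * M + real (card {j..h}) * (M * (\<gamma> + \<epsilon> / (b * \<gamma> ^ h)))"
    using term_le by (intro add_left_mono sum_bounded_above) auto
  also have "\<dots> \<le> al * M + real h * (M * (\<gamma> + \<epsilon> / (b * \<gamma> ^ h)))"
    using jl n p b \<gamma> \<epsilon> by (intro add_left_mono mult_right_mono) (auto simp: M_def)
  also have "\<dots> = (al + real h * (\<gamma> + \<epsilon> / (b * \<gamma> ^ h))) * real (card V) ^ (j + l) * pr V E r ^ (j * l)"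
    by (simp add: M_def n_def algebra_simps)
  finally show ?thesis .
qed

lemma sum_not_good_le_eps_seq:
  assumes G: "simple_graph V E" and p: "0 < pr V E r" and b: "0 < b" "b < 1"
    and al: "0 < al" "al \<le> eps_seq b h h / 3"
    and i: "i \<le> h" and jl: "1 \<le> l" "l \<le> j" "j \<le> h"
  shows "(\<Sum>S\<in>seqs V j - {S. good al b h r V E i S}. real (card (nbhd V E S)) ^ l)
    \<le> eps_seq b h (h - i) * real (card V) ^ (j + l) * pr V E r ^ (j * l)"
  using i jl
proof (induction i arbitrary: j l)
  case 0
  then have h: "1 \<le> h" by simp
  have al_le: "al \<le> eps_seq b h h" using al eps_seq_pos[OF b(1) h, of h] by simp
  then have "al \<le> 1" using eps_seq_le[OF b(1) _ h, of h] b by simp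
  then have "(\<Sum>S\<in>seqs V j - {S. good al b h r V E 0 S}. real (card (nbhd V E S)) ^ l)
      \<le> al * real (card V) ^ (j + l) * pr V E r ^ (j * l)"
    using sum_not_good_0_le[OF simple_graph_finite[OF G] less_imp_le[OF p]] al 0 by simp
  also have "\<dots> \<le> eps_seq b h (h - 0) * real (card V) ^ (j + l) * pr V E r ^ (j * l)"
    using al_le p by (intro mult_right_mono) auto
  finally show ?case .
next
  case (Suc i)
  then have h: "1 \<le> h" by simp
  define d where "d = h - Suc i"
  have hd: "h - i = Suc d" using Suc.prems by (simp add: d_def)
  define \<gamma> where "\<gamma> = eps_seq b h d / (3 * real h)"
  have \<gamma>: "0 < \<gamma>" "\<gamma> \<le> 1"
    using eps_seq_pos[OF b(1) h, of d] eps_seq_le[OF b(1) _ h, of d] b h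
    by (auto simp: \<gamma>_def field_simps)
  have al_le: "al \<le> eps_seq b h d / 3"
    using al eps_seq_antimono[OF b(1) _ h, of d h] b by (simp add: d_def)
  have al_le_1: "al \<le> 1" using al_le eps_seq_le[OF b(1) _ h, of d] b by simp
  have IH: "(\<Sum>T\<in>seqs V k - {T. good al b h r V E i T}. real (card (nbhd V E T)) ^ j)
      \<le> eps_seq b h (Suc d) * real (card V) ^ (k + j) * pr V E r ^ (k * j)"
    if "j \<le> k" "k \<le> h" for k
    using Suc that by (simp add: hd)
  have "(\<Sum>S\<in>seqs V j - {S. good al b h r V E (Suc i) S}. real (card (nbhd V E S)) ^ l)
      \<le> (al + real h * (\<gamma> + eps_seq b h (Suc d) / (b * \<gamma> ^ h)))
          * real (card V) ^ (j + l) * pr V E r ^ (j * l)"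
    using al(1) eps_seq_pos[OF b(1) h, of "Suc d"] Suc.prems
    by (intro sum_not_good_Suc_le[OF G p _ al_le_1 b(1) \<gamma>] IH) auto
  also have "\<dots> = (al + 2 / 3 * eps_seq b h d) * real (card V) ^ (j + l) * pr V E r ^ (j * l)"
    using eps_seq_step_eq[OF b(1) h, of d] by (simp add: \<gamma>_def)
  also have "\<dots> \<le> eps_seq b h (h - Suc i) * real (card V) ^ (j + l) * pr V E r ^ (j * l)"
    using al_le p by (intro mult_right_mono) (auto simp: d_def)
  finally show ?case .
qed

theorem lemma3p4:
  fixes h r :: nat and \<beta> :: real
  assumes "0 < r" "r \<le> h" "0 < \<beta>" "\<beta> < 1"
  shows "\<exists>\<alpha>::real. 0 < \<alpha> \<and> \<alpha> < 1 \<and>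
    (\<forall>V E. simple_graph V E \<longrightarrow>
      (\<forall>i j l. i \<le> h \<longrightarrow> 1 \<le> j \<longrightarrow> j \<le> h \<longrightarrow> 1 \<le> l \<longrightarrow> l \<le> j \<longrightarrow>
        (\<Sum>S \<in> seqs V j - {S. good \<alpha> \<beta> h r V E i S}. real (card (nbhd V E S)) ^ l)
          \<le> \<beta> * real (card V) ^ (j + l) * pr V E r ^ (j * l)))"
proof -
  have h: "1 \<le> h" and \<beta>: "0 < \<beta>" "\<beta> \<le> 1" using assms by auto
  define \<alpha> where "\<alpha> = eps_seq \<beta> h h / 3"
  have \<alpha>: "0 < \<alpha>" "\<alpha> < 1"
    using eps_seq_pos[OF \<beta>(1) h, of h] eps_seq_le[OF \<beta> h, of h] \<beta> by (auto simp: \<alpha>_def)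
  show ?thesis
  proof (intro exI conjI allI impI)
    fix V E i j l
    assume G: "simple_graph V E" and ijl: "i \<le> h" "1 \<le> j" "j \<le> h" "1 \<le> l" "l \<le> j"
    show "(\<Sum>S \<in> seqs V j - {S. good \<alpha> \<beta> h r V E i S}. real (card (nbhd V E S)) ^ l)
          \<le> \<beta> * real (card V) ^ (j + l) * pr V E r ^ (j * l)"
    proof (cases "pr V E r = 0")
      case True
      then show ?thesis
        using sum_power_card_nbhd_eq_0_if_pr_eq_0[OF simple_graph_finite[OF G] assms(1) True Diff_subset] ijl
        by (simp add: zero_power)
    next
      case False
      then have p: "0 < pr V E r" using pr_nonneg[OF assms(1), of V E] by simp
      have "(\<Sum>S \<in> seqs V j - {S. good \<alpha> \<beta> h r V E i S}. real (card (nbhd V E S)) ^ l)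
          \<le> eps_seq \<beta> h (h - i) * real (card V) ^ (j + l) * pr V E r ^ (j * l)"
        using \<alpha> ijl assms by (intro sum_not_good_le_eps_seq[OF G p]) (auto simp: \<alpha>_def)
      also have "\<dots> \<le> \<beta> * real (card V) ^ (j + l) * pr V E r ^ (j * l)"
        using eps_seq_le[OF \<beta> h] p by (intro mult_right_mono) auto
      finally show ?thesis .
    qed
  qed (use \<alpha> in auto)
qed

end
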